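(* Let $\epsilon>0$ and let $\mathcal{P}^\epsilon$ be the strategy \[ M_n=\begin{cases}-\epsilon s_{n-1} & \text{if } |s_{i-1}|\le\sqrt{i+2/\epsilon}-1 \text{ for all } i=1,\dots,n,\\ 0&\text{otherwise.}\end{cases} \] Then $\mathcal{P}^\epsilon$ weakly forces the event \[ E_3^\epsilon:=\Bigl\{\xi:\ \exists n\ |s_n|>\sqrt{n+1+2/\epsilon}-1\ \ \text{or}\ \ \bigl(\limsup_{n\to\infty}|s_n|=\infty\ \text{and}\ s_n\ne0\ \text{for all but finitely many } n\bigr)\Bigr\}. \]
   Context: Fair-coin game: in rounds $n=1,2,\dots$ Skeptic announces $M_n\in\mathbb{R}$ (depending only on $x_1,\dots,x_{n-1}$), then Reality announces $x_n\in\{-1,1\}$. A path is an infinite sequence $\xi=x_1x_2\cdots\in\{-1,1\}^{\mathbb{N}}$, and $\Omega$ is the set of paths. We write $s_n:=x_1+\cdots+x_n$, with $s_0=0$. The capital process of a strategy with zero initial capital is $\mathcal{K}^{\mathcal{P}}_n=\sum_{k=1}^nM_kx_k$. A strategy $\mathcal{P}$ weakly forces $E\subseteq\Omega$ if $\mathcal{K}^{\mathcal{P}}_n(\xi)\ge-1$ for all $\xi\in\Omega$ and $n\ge0$, and $\limsup_n\mathcal{K}^{\mathcal{P}}_n(\xi)=\infty$ for every $\xi\notin E$. Skeptic can weakly force $E$ if some strategy does. *)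

theory Defs
  imports "HOL-Analysis.Analysis" "HOL-Library.Liminf_Limsup"
begin

text \<open>Paths: xi k is Reality's move x_(k+1) (0-indexed), each in {-1,1}.\<close>
definition paths :: "(nat \<Rightarrow> real) set" where
  "paths = {xi. \<forall>k. xi k \<in> {-1, 1}}"

definition ssum :: "(nat \<Rightarrow> real) \<Rightarrow> nat \<Rightarrow> real" where
  "ssum xi n = (\<Sum>k<n. xi k)"

text \<open>A strategy maps the history x_1..x_(n-1) (a list) to the move M_n.\<close>
type_synonym strategy = "real list \<Rightarrow> real"

definition capital :: "strategy \<Rightarrow> nat \<Rightarrow> (nat \<Rightarrow> real) \<Rightarrow> real" where
  "capital P n xi = (\<Sum>k<n. P (map xi [0..<k]) * xi k)"

definition weakly_forces :: "strategy \<Rightarrow> (nat \<Rightarrow> real) set \<Rightarrow> bool" where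
  "weakly_forces P E \<longleftrightarrow>
     (\<forall>xi\<in>paths. \<forall>n. capital P n xi \<ge> -1) \<and>
     (\<forall>xi\<in>paths. xi \<notin> E \<longrightarrow> limsup (\<lambda>n. ereal (capital P n xi)) = \<infinity>)"

definition P_eps :: "real \<Rightarrow> strategy" where
  "P_eps eps h =
     (if \<forall>i\<in>{1..length h + 1}. \<bar>sum_list (take (i - 1) h)\<bar> \<le> sqrt (real i + 2 / eps) - 1
      then - eps * sum_list h else 0)"

definition E3 :: "real \<Rightarrow> (nat \<Rightarrow> real) set" where
  "E3 eps = {xi. (\<exists>n. \<bar>ssum xi n\<bar> > sqrt (real n + 1 + 2 / eps) - 1) \<or>
       (limsup (\<lambda>n. ereal \<bar>ssum xi n\<bar>) = \<infinity> \<and> (\<forall>\<^sub>F n in sequentially. ssum xi n \<noteq> 0))}"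

end

theory Submission
  imports Defs
begin

text \<open>While the strategy is active, the identity
  \<open>-\<epsilon> s x = \<epsilon>/2 (1 - ((s + x)\<^sup>2 - s\<^sup>2))\<close> for \<open>x = \<plusminus>1\<close> telescopes to
  \<open>K\<^sub>n = \<epsilon>/2 (n - s\<^sub>n\<^sup>2)\<close>. The activity bound on \<open>s\<^sub>n\<^sub>-\<^sub>1\<close> gives \<open>s\<^sub>n\<^sup>2 \<le> n + 2/\<epsilon>\<close>,
  i.e. \<open>K\<^sub>n \<ge> -1\<close>, and once the strategy stops the capital is frozen. Off \<open>E\<^sub>3\<^sup>\<epsilon>\<close> the
  strategy never stops, and either \<open>|s\<^sub>n|\<close> stays bounded along a tail or \<open>s\<^sub>n = 0\<close>
  infinitely often; in both cases \<open>n - s\<^sub>n\<^sup>2\<close> exceeds any bound infinitely often.\<close>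

lemma ssum_Suc: "ssum xi (Suc n) = ssum xi n + xi n"
  unfolding ssum_def by simp

lemma sum_list_map_upt: "sum_list (map xi [0..<n]) = ssum xi n"
  unfolding ssum_def by (induction n) auto

lemma capital_Suc: "capital P (Suc n) xi = capital P n xi + P (map xi [0..<n]) * xi n"
  unfolding capital_def by simp

lemma pathsD: "xi \<in> paths \<Longrightarrow> xi k = 1 \<or> xi k = -1"
  unfolding paths_def by auto

text \<open>\<open>P_eps_active eps xi k\<close> is the condition under which \<open>P_eps eps\<close> plays
  \<open>M\<^sub>k\<^sub>+\<^sub>1 \<noteq> 0\<close>, with the paper's index \<open>i\<close> shifted to \<open>j = i - 1\<close>.\<close>
definition P_eps_active :: "real \<Rightarrow> (nat \<Rightarrow> real) \<Rightarrow> nat \<Rightarrow> bool" where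
  "P_eps_active eps xi k \<longleftrightarrow> (\<forall>j\<le>k. \<bar>ssum xi j\<bar> \<le> sqrt (real j + 1 + 2 / eps) - 1)"

lemma P_eps_active_mono: "P_eps_active eps xi n \<Longrightarrow> m \<le> n \<Longrightarrow> P_eps_active eps xi m"
  unfolding P_eps_active_def by auto

lemma P_eps_map_upt:
  "P_eps eps (map xi [0..<k]) = (if P_eps_active eps xi k then - eps * ssum xi k else 0)"
proof -
  have take_prefix: "sum_list (take j (map xi [0..<k])) = ssum xi j" if "j \<le> k" for j
    using that by (simp add: take_map sum_list_map_upt)
  have "{1..k + 1} = Suc ` {..k}"
    by (metis image_Suc_atMost Suc_eq_plus1)
  then have "(\<forall>i\<in>{1..k + 1}. \<bar>sum_list (take (i - 1) (map xi [0..<k]))\<bar> \<le> sqrt (real i + 2 / eps) - 1)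
      \<longleftrightarrow> P_eps_active eps xi k"
    by (auto simp: P_eps_active_def take_prefix add.commute)
  then show ?thesis
    unfolding P_eps_def by (simp add: sum_list_map_upt)
qed

lemma capital_P_eps_while_active:
  assumes "xi \<in> paths" and "\<forall>k<n. P_eps_active eps xi k"
  shows "capital (P_eps eps) n xi = eps / 2 * (real n - (ssum xi n)\<^sup>2)"
  using assms(2)
proof (induction n)
  case 0
  then show ?case by (simp add: capital_def ssum_def)
next
  case (Suc n)
  then have "P_eps_active eps xi n" by simp
  with Suc show ?case
    using pathsD[OF assms(1), of n]
    by (auto simp: capital_Suc P_eps_map_upt ssum_Suc power2_eq_square algebra_simps)
qed

lemma capital_P_eps_stopped:
  assumes "\<not> P_eps_active eps xi m" and "m \<le> n"
  shows "capital (P_eps eps) n xi = capital (P_eps eps) m xi"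
  using assms(2)
proof (induction n rule: dec_induct)
  case (step n)
  then have "\<not> P_eps_active eps xi n"
    using assms(1) P_eps_active_mono by blast
  with step.IH show ?case
    by (simp add: capital_Suc P_eps_map_upt)
qed simp

lemma capital_P_eps_ge_while_active:
  assumes "xi \<in> paths" and "eps > 0" and "\<forall>k<n. P_eps_active eps xi k"
  shows "capital (P_eps eps) n xi \<ge> -1"
proof (cases n)
  case 0
  then show ?thesis by (simp add: capital_def)
next
  case (Suc k)
  have "\<bar>ssum xi k\<bar> \<le> sqrt (real k + 1 + 2 / eps) - 1"
    using assms(3) Suc unfolding P_eps_active_def by blast
  moreover have "\<bar>ssum xi n\<bar> \<le> \<bar>ssum xi k\<bar> + 1"
    using Suc pathsD[OF assms(1), of k] by (auto simp: ssum_Suc)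
  moreover have "real k + 1 = real n"
    using Suc by simp
  ultimately have "\<bar>ssum xi n\<bar> \<le> sqrt (real n + 2 / eps)"
    by simp
  then have "\<bar>ssum xi n\<bar>\<^sup>2 \<le> (sqrt (real n + 2 / eps))\<^sup>2"
    by (rule power_mono) simp
  then have "real n - (ssum xi n)\<^sup>2 \<ge> - 2 / eps"
    using assms(2) by simp
  then have "eps / 2 * (real n - (ssum xi n)\<^sup>2) \<ge> eps / 2 * (- 2 / eps)"
    using assms(2) by (intro mult_left_mono) auto
  then show ?thesis
    using assms(2) capital_P_eps_while_active[OF assms(1,3)] by simp
qed

lemma capital_P_eps_ge:
  assumes "xi \<in> paths" and "eps > 0"
  shows "capital (P_eps eps) n xi \<ge> -1"
proof (cases "\<forall>k<n. P_eps_active eps xi k")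
  case True
  then show ?thesis
    using capital_P_eps_ge_while_active[OF assms] by blast
next
  case False
  then obtain m where stop: "\<not> P_eps_active eps xi m" and active: "\<forall>k<m. P_eps_active eps xi k"
    using exists_least_iff[of "\<lambda>k. \<not> P_eps_active eps xi k"] by blast
  have "m \<le> n"
    using False active by (metis leI less_trans)
  then show ?thesis
    using capital_P_eps_stopped[OF stop] capital_P_eps_ge_while_active[OF assms active] by metis
qed

lemma limsup_ereal_eq_PInfI:
  fixes f :: "nat \<Rightarrow> real"
  assumes "\<And>B. \<exists>\<^sub>F n in sequentially. f n > B"
  shows "limsup (\<lambda>n. ereal (f n)) = \<infinity>"
proof (rule ccontr)
  assume "limsup (\<lambda>n. ereal (f n)) \<noteq> \<infinity>"
  then obtain C :: real where "limsup (\<lambda>n. ereal (f n)) < ereal C"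
    by (metis less_PInf_Ex_of_nat)
  then have "\<forall>\<^sub>F n in sequentially. f n < C"
    by (auto dest: Limsup_lessD)
  with assms[of C] have "\<exists>\<^sub>F n in sequentially. C < f n \<and> f n < C"
    by (rule frequently_eventually_frequently)
  then show False
    by (auto dest: frequently_ex)
qed

lemma frequently_of_nat_minus_square_gt:
  fixes s :: "nat \<Rightarrow> real"
  assumes "limsup (\<lambda>n. ereal \<bar>s n\<bar>) \<noteq> \<infinity> \<or> (\<exists>\<^sub>F n in sequentially. s n = 0)"
  shows "\<exists>\<^sub>F n in sequentially. real n - (s n)\<^sup>2 > B"
  using assms
proof
  assume "limsup (\<lambda>n. ereal \<bar>s n\<bar>) \<noteq> \<infinity>"
  then obtain C :: real where "limsup (\<lambda>n. ereal \<bar>s n\<bar>) < ereal C"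
    by (metis less_PInf_Ex_of_nat)
  then have "\<forall>\<^sub>F n in sequentially. \<bar>s n\<bar> < C"
    by (auto dest: Limsup_lessD)
  moreover have "\<forall>\<^sub>F n in sequentially. real n > C\<^sup>2 + B"
    using filterlim_real_sequentially by (simp add: filterlim_at_top_dense)
  ultimately have "\<forall>\<^sub>F n in sequentially. real n - (s n)\<^sup>2 > B"
  proof eventually_elim
    case (elim n)
    have "(s n)\<^sup>2 \<le> C\<^sup>2"
      using elim(1) by (metis abs_ge_zero less_imp_le power2_abs power_mono)
    with elim(2) show ?case
      by linarith
  qed
  then show ?thesis by (simp add: eventually_frequently)
next
  assume "\<exists>\<^sub>F n in sequentially. s n = 0"
  moreover have "\<forall>\<^sub>F n in sequentially. real n > B"
    using filterlim_real_sequentially by (simp add: filterlim_at_top_dense)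
  ultimately have "\<exists>\<^sub>F n in sequentially. s n = 0 \<and> real n > B"
    by (rule frequently_eventually_frequently)
  then show ?thesis
    by (rule frequently_elim1) simp
qed

lemma frequently_capital_P_eps_gt:
  assumes "xi \<in> paths" and "eps > 0" and "\<forall>k. P_eps_active eps xi k"
    and "limsup (\<lambda>n. ereal \<bar>ssum xi n\<bar>) \<noteq> \<infinity> \<or> (\<exists>\<^sub>F n in sequentially. ssum xi n = 0)"
  shows "\<exists>\<^sub>F n in sequentially. capital (P_eps eps) n xi > B"
  using frequently_of_nat_minus_square_gt[OF assms(4), of "2 * B / eps"]
proof (rule frequently_elim1)
  fix n
  assume "2 * B / eps < real n - (ssum xi n)\<^sup>2"
  then have "eps / 2 * (2 * B / eps) < eps / 2 * (real n - (ssum xi n)\<^sup>2)"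
    using assms(2) by (intro mult_strict_left_mono) auto
  moreover have "capital (P_eps eps) n xi = eps / 2 * (real n - (ssum xi n)\<^sup>2)"
    using capital_P_eps_while_active assms(1,3) by blast
  ultimately show "capital (P_eps eps) n xi > B"
    using assms(2) by simp
qed

theorem lemma3:
  fixes eps :: real
  assumes "eps > 0"
  shows "weakly_forces (P_eps eps) (E3 eps)"
  unfolding weakly_forces_def
proof (intro conjI ballI allI impI)
  fix xi n
  assume "xi \<in> paths"
  then show "capital (P_eps eps) n xi \<ge> -1"
    using capital_P_eps_ge assms by blast
next
  fix xi
  assume xi: "xi \<in> paths" and "xi \<notin> E3 eps"
  then have "\<forall>k. P_eps_active eps xi k"
    and "limsup (\<lambda>n. ereal \<bar>ssum xi n\<bar>) \<noteq> \<infinity> \<or> (\<exists>\<^sub>F n in sequentially. ssum xi n = 0)"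
    unfolding E3_def P_eps_active_def by (auto simp: not_less not_eventually)
  then show "limsup (\<lambda>n. ereal (capital (P_eps eps) n xi)) = \<infinity>"
    using frequently_capital_P_eps_gt[OF xi assms] by (intro limsup_ereal_eq_PInfI) blast
qed

end
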